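(* In the multi-colored system with $n\ge2$, let $\mathbf a_0\in(0,\infty)^n$ with $\rho_0=a_0^1+\dots+a_0^n$ in the interior of the domain of $\varphi$. Then the Frame condition (FC) holds at $\mathbf a_0$ (equivalently: $\Gamma_{ij}(\mathbf a_0)=0$ for $i\ne j$ and $\tilde g_i(\mathbf a_0)\Gamma_{jj}(\mathbf a_0)=\tilde g_j(\mathbf a_0)\Gamma_{ii}(\mathbf a_0)$ for all $i\ne j$) if and only if $\varphi'(\rho_0)=\varphi(\rho_0)/\rho_0$, which in turn is equivalent to $\sigma^2(\rho_0)=\rho_0$, where $\sigma^2(\rho)$ is the variance of $\nu_\rho$.
   Context: Multi-colored zero-range system: given a single-species rate $g:\mathbb Z_+\to[0,\infty)$ with $g(k)=0\iff k=0$, define $g_i(\mathbf k)=g(|\mathbf k|)k^i/|\mathbf k|$ for $\mathbf k\in\mathbb Z_+^n$, $|\mathbf k|=\sum_ik^i$. For the single-species system, $\nu_\rho(k)=Z_{\varphi}^{-1}\varphi^k/g(k)!$ with $g(k)!=g(1)\cdots g(k)$, $Z_\varphi=\sum_k\varphi^k/g(k)!$, and $\varphi=\varphi(\rho)$ the fugacity chosen so that $\nu_\rho$ has mean $\rho$. The multi-colored invariant law of density $\mathbf a$ is $\nu_{\mathbf a}(\mathbf k)=\nu_\rho(|\mathbf k|)\frac{|\mathbf k|!}{k^1!\cdots k^n!}\prod_i(a^i/\rho)^{k^i}$, $\rho=\sum_ia^i$. $\tilde g_i(\mathbf a)=E_{\nu_{\mathbf a}}[g_i]$; $\Gamma(\mathbf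 a)$ is the covariance matrix of $\mathbf k$ under $\nu_{\mathbf a}$. Frame condition (FC) at $\mathbf a_0$: there is $\lambda$ with $\partial_{a^i}\tilde g_i(\mathbf a_0)=\lambda$ for all $i$ and $\partial_{a^j}\tilde g_i(\mathbf a_0)=0$ for $i\ne j$. *)

theory Defs
  imports "HOL-Analysis.Analysis"
begin

definition gfact :: "(nat \<Rightarrow> real) \<Rightarrow> nat \<Rightarrow> real" where
  "gfact g k = (\<Prod>i\<in>{1..k}. g i)"

definition wt :: "(nat \<Rightarrow> real) \<Rightarrow> real \<Rightarrow> nat \<Rightarrow> real" where
  "wt g phi k = phi ^ k / gfact g k"

definition Zf :: "(nat \<Rightarrow> real) \<Rightarrow> real \<Rightarrow> real" where
  "Zf g phi = (\<Sum>k. wt g phi k)"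

definition meanf :: "(nat \<Rightarrow> real) \<Rightarrow> real \<Rightarrow> real" where
  "meanf g phi = (\<Sum>k. real k * wt g phi k) / Zf g phi"

definition adm_fug :: "(nat \<Rightarrow> real) \<Rightarrow> real \<Rightarrow> bool" where
  "adm_fug g phi \<longleftrightarrow> phi \<ge> 0 \<and> summable (wt g phi) \<and> summable (\<lambda>k. real k * wt g phi k)"

definition rho_dom :: "(nat \<Rightarrow> real) \<Rightarrow> real set" where
  "rho_dom g = {rho. \<exists>phi. adm_fug g phi \<and> meanf g phi = rho}"

definition fug :: "(nat \<Rightarrow> real) \<Rightarrow> real \<Rightarrow> real" where
  "fug g rho = (THE phi. adm_fug g phi \<and> meanf g phi = rho)"

definition nu1 :: "(nat \<Rightarrow> real) \<Rightarrow> real \<Rightarrow> nat \<Rightarrow> real" where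
  "nu1 g rho m = wt g (fug g rho) m / Zf g (fug g rho)"

definition sigma2 :: "(nat \<Rightarrow> real) \<Rightarrow> real \<Rightarrow> real" where
  "sigma2 g rho = (\<Sum>m. (real m)^2 * nu1 g rho m) - rho^2"

definition tot :: "('n::finite \<Rightarrow> nat) \<Rightarrow> nat" where
  "tot k = (\<Sum>i\<in>UNIV. k i)"

definition gi :: "(nat \<Rightarrow> real) \<Rightarrow> 'n::finite \<Rightarrow> ('n \<Rightarrow> nat) \<Rightarrow> real" where
  "gi g i k = g (tot k) * real (k i) / real (tot k)"

definition nuA :: "(nat \<Rightarrow> real) \<Rightarrow> ('n::finite \<Rightarrow> real) \<Rightarrow> ('n \<Rightarrow> nat) \<Rightarrow> real" where
  "nuA g a k = (let rho = (\<Sum>i\<in>UNIV. a i) in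
     nu1 g rho (tot k) * (fact (tot k) / (\<Prod>i\<in>UNIV. fact (k i)))
       * (\<Prod>i\<in>UNIV. (a i / rho) ^ (k i)))"

definition EA :: "(nat \<Rightarrow> real) \<Rightarrow> ('n::finite \<Rightarrow> real) \<Rightarrow> (('n \<Rightarrow> nat) \<Rightarrow> real) \<Rightarrow> real" where
  "EA g a f = infsum (\<lambda>k. nuA g a k * f k) UNIV"

definition gtilde :: "(nat \<Rightarrow> real) \<Rightarrow> ('n::finite \<Rightarrow> real) \<Rightarrow> 'n \<Rightarrow> real" where
  "gtilde g a i = EA g a (gi g i)"

definition Gamma :: "(nat \<Rightarrow> real) \<Rightarrow> ('n::finite \<Rightarrow> real) \<Rightarrow> 'n \<Rightarrow> 'n \<Rightarrow> real" where
  "Gamma g a i j = EA g a (\<lambda>k. real (k i) * real (k j))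
     - EA g a (\<lambda>k. real (k i)) * EA g a (\<lambda>k. real (k j))"

definition FC :: "(nat \<Rightarrow> real) \<Rightarrow> ('n::finite \<Rightarrow> real) \<Rightarrow> bool" where
  "FC g a0 \<longleftrightarrow> (\<exists>lam.
     (\<forall>i. ((\<lambda>t. gtilde g (a0(i := t)) i) has_real_derivative lam) (at (a0 i))) \<and>
     (\<forall>i j. i \<noteq> j \<longrightarrow> ((\<lambda>t. gtilde g (a0(j := t)) i) has_real_derivative 0) (at (a0 j))))"

end

theory Submission
  imports Defs
begin

text \<open>Given the total number \<open>m\<close> of particles, the colours under \<open>nuA g a\<close> are multinomial with
  cell probabilities \<open>a i / \<rho>\<close>. The multinomial moments then give
  \<open>gtilde g a i = (a i / \<rho>) \<phi>(\<rho>)\<close> and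
  \<open>\<Gamma>\<^sub>i\<^sub>l = (\<sigma>\<^sup>2(\<rho>) - \<rho>) a i a l / \<rho>\<^sup>2 + [i = l] a i\<close>,
  so the conditions on \<open>\<Gamma>\<close> hold iff \<open>\<sigma>\<^sup>2(\<rho>) = \<rho>\<close>. Changing one coordinate \<open>a j\<close> only moves \<open>\<rho>\<close>,
  so \<open>\<partial>\<^sub>j gtilde\<^sub>i = a i H'(\<rho>)\<close> for \<open>i \<noteq> j\<close> with \<open>H(s) = \<phi>(s) / s\<close>, and (FC) holds iff
  \<open>H'(\<rho>) = 0\<close>, i.e. \<open>\<phi>'(\<rho>) = \<phi>(\<rho>) / \<rho>\<close>. Finally \<open>\<phi>\<close> inverts the mean
  \<open>\<phi> Z'(\<phi>) / Z(\<phi>)\<close>, whose derivative in \<open>\<phi>\<close> is \<open>\<sigma>\<^sup>2 / \<phi>\<close>; hence \<open>\<phi>' = \<phi> / \<sigma>\<^sup>2\<close>.\<close>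

definition tot_fiber :: "nat \<Rightarrow> ('n::finite \<Rightarrow> nat) set" where
  "tot_fiber m = {k. tot k = m}"

definition multinom_weight :: "('n::finite \<Rightarrow> real) \<Rightarrow> ('n \<Rightarrow> nat) \<Rightarrow> real" where
  "multinom_weight p k = (\<Prod>i\<in>UNIV. p i ^ k i / fact (k i))"

text \<open>When \<open>p\<close> is a probability vector, \<open>multinom_mean p h m\<close> is the mean of \<open>h\<close> under the
  multinomial law with \<open>m\<close> trials and cell probabilities \<open>p\<close>.\<close>
definition multinom_mean :: "('n::finite \<Rightarrow> real) \<Rightarrow> (('n \<Rightarrow> nat) \<Rightarrow> real) \<Rightarrow> nat \<Rightarrow> real" where
  "multinom_mean p h m = fact m * (\<Sum>k\<in>tot_fiber m. multinom_weight p k * h k)"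

lemma sum_UNIV_fun_upd:
  fixes a :: "'n::finite \<Rightarrow> 'a::comm_monoid_add"
  shows "(\<Sum>i\<in>UNIV. (a(j := t)) i) = t + (\<Sum>i\<in>UNIV - {j}. a i)"
  by (subst sum.remove[of UNIV j]) (auto intro!: sum.cong)

lemma le_tot: "k j \<le> tot k"
  unfolding tot_def by (rule member_le_sum) auto

lemma tot_fun_upd: "tot (k(j := x)) = tot k - k j + x"
  unfolding tot_def sum_UNIV_fun_upd by (simp add: sum.remove[of UNIV j])

lemma tot_fiber_0: "tot_fiber 0 = {\<lambda>_. 0}"
  unfolding tot_fiber_def tot_def by (auto simp: fun_eq_iff)

lemma finite_tot_fiber: "finite (tot_fiber m :: ('n::finite \<Rightarrow> nat) set)"
proof (rule finite_subset)
  show "tot_fiber m \<subseteq> PiE UNIV (\<lambda>_::'n. {..m})"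
    using le_tot by (fastforce simp: tot_fiber_def PiE_def extensional_def)
qed (rule finite_PiE, auto)

lemma multinom_weight_fun_upd_Suc:
  "real (Suc (k j)) * multinom_weight p (k(j := Suc (k j))) = p j * multinom_weight p k"
proof -
  define r where "r = (\<Prod>i\<in>UNIV-{j}. p i ^ k i / fact (k i))"
  have upd: "multinom_weight p (k(j := Suc (k j))) = p j ^ Suc (k j) / fact (Suc (k j)) * r"
    unfolding multinom_weight_def r_def by (subst prod.remove[of UNIV j]) (auto intro!: prod.cong)
  have "multinom_weight p k = p j ^ k j / fact (k j) * r"
    unfolding multinom_weight_def r_def by (simp add: prod.remove[of UNIV j])
  then show ?thesis unfolding upd by (simp add: field_simps del: of_nat_Suc)
qed

lemma sum_tot_fiber_shift:
  fixes h :: "('n::finite \<Rightarrow> nat) \<Rightarrow> real"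
  shows "(\<Sum>k\<in>tot_fiber m. h (k(j := Suc (k j)))) = (\<Sum>k\<in>{k\<in>tot_fiber (Suc m). k j > 0}. h k)"
proof (rule sum.reindex_bij_witness[where i = "\<lambda>k. k(j := k j - 1)" and j = "\<lambda>k. k(j := Suc (k j))"])
  fix a :: "'n \<Rightarrow> nat" assume "a \<in> tot_fiber m"
  with le_tot[of a j] show "a(j := Suc (a j)) \<in> {k\<in>tot_fiber (Suc m). k j > 0}"
    by (simp add: tot_fiber_def tot_fun_upd)
next
  fix b :: "'n \<Rightarrow> nat" assume "b \<in> {k\<in>tot_fiber (Suc m). k j > 0}"
  with le_tot[of b j] show "b(j := b j - 1) \<in> tot_fiber m" "(b(j := b j - 1))(j := Suc ((b(j := b j - 1)) j)) = b"
    by (auto simp: tot_fiber_def tot_fun_upd)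
qed simp_all

text \<open>Splitting \<open>(m + 1) = \<Sum>j. k j\<close> amounts to conditioning on the cell of one trial.\<close>
lemma multinom_mean_Suc:
  "multinom_mean p h (Suc m) = (\<Sum>j\<in>UNIV. p j * multinom_mean p (\<lambda>k. h (k(j := Suc (k j)))) m)"
proof -
  let ?F = "\<lambda>k. multinom_weight p k * h k"
  have "multinom_mean p h (Suc m) = fact m * (\<Sum>k\<in>tot_fiber (Suc m). real (tot k) * ?F k)"
    unfolding multinom_mean_def sum_distrib_left by (auto simp: tot_fiber_def algebra_simps intro!: sum.cong)
  also have "\<dots> = fact m * (\<Sum>j\<in>UNIV. \<Sum>k\<in>{k\<in>tot_fiber (Suc m). k j > 0}. real (k j) * ?F k)"
    unfolding tot_def of_nat_sum sum_distrib_right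
    by (subst sum.swap, intro arg_cong[where f="\<lambda>x. fact m * x"] sum.cong refl sum.mono_neutral_right)
       (auto simp: finite_tot_fiber)
  also have "\<dots> = fact m * (\<Sum>j\<in>UNIV. \<Sum>k\<in>tot_fiber m.
      real (Suc (k j)) * multinom_weight p (k(j := Suc (k j))) * h (k(j := Suc (k j))))"
    using sum_tot_fiber_shift[where h="\<lambda>k. real (k j) * ?F k" for j, symmetric]
    by (simp add: mult.assoc)
  also have "\<dots> = (\<Sum>j\<in>UNIV. p j * multinom_mean p (\<lambda>k. h (k(j := Suc (k j)))) m)"
    unfolding multinom_weight_fun_upd_Suc multinom_mean_def sum_distrib_left
    by (simp add: algebra_simps)
  finally show ?thesis .
qed

lemma multinom_mean_add: "multinom_mean p (\<lambda>k. h1 k + h2 k) m = multinom_mean p h1 m + multinom_mean p h2 m"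
  unfolding multinom_mean_def by (simp add: sum.distrib distrib_left)

lemma multinom_mean_cmult: "multinom_mean p (\<lambda>k. c * h k) m = c * multinom_mean p h m"
  unfolding multinom_mean_def by (simp add: sum_distrib_left mult.left_commute)

lemma multinom_mean_cong: "(\<And>k. tot k = m \<Longrightarrow> h k = h' k) \<Longrightarrow> multinom_mean p h m = multinom_mean p h' m"
  unfolding multinom_mean_def tot_fiber_def by (auto intro!: sum.cong)

lemma multinom_mean_0: "multinom_mean p h 0 = h (\<lambda>_. 0)"
  unfolding multinom_mean_def tot_fiber_0 multinom_weight_def by simp

lemma of_nat_fun_upd_Suc: "real ((k(j := Suc (k j))) i) = real (k i) + of_bool (j = i)"
  by simp

lemma sum_mult_of_bool_eq_coord: "(\<Sum>j\<in>UNIV. (p :: 'n::finite \<Rightarrow> real) j * (of_bool (j = i) * c)) = p i * c"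
  by (simp add: mult.assoc[symmetric] flip: sum_distrib_right)

context
  fixes p :: "'n::finite \<Rightarrow> real"
  assumes sum_p: "(\<Sum>i\<in>UNIV. p i) = 1"
begin

lemma sum_mult_const: "(\<Sum>j\<in>UNIV. p j * c) = c"
  by (simp add: sum_p flip: sum_distrib_right)

lemma multinom_mean_const: "multinom_mean p (\<lambda>_. c) m = c"
  by (induction m) (simp_all add: multinom_mean_0 multinom_mean_Suc sum_mult_const)

lemma multinom_mean_coord: "multinom_mean p (\<lambda>k. real (k i)) m = real m * p i"
proof (induction m)
  case (Suc m)
  have "multinom_mean p (\<lambda>k. real (k i)) (Suc m) = (\<Sum>j\<in>UNIV. p j * (real m * p i + of_bool (j = i) * 1))"
    unfolding multinom_mean_Suc of_nat_fun_upd_Suc multinom_mean_add multinom_mean_const Suc by simp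
  also have "\<dots> = real (Suc m) * p i"
    by (simp only: distrib_left sum.distrib sum_mult_const sum_mult_of_bool_eq_coord) (simp add: algebra_simps)
  finally show ?case .
qed (simp add: multinom_mean_0)

lemma multinom_mean_coord_mult:
  "multinom_mean p (\<lambda>k. real (k i) * real (k l)) m =
     real m * (real m - 1) * p i * p l + of_bool (i = l) * (real m * p i)"
proof (induction m)
  case (Suc m)
  have shift: "real ((k(j := Suc (k j))) i) * real ((k(j := Suc (k j))) l) =
      real (k i) * real (k l) + (of_bool (j = l) * real (k i) + (of_bool (j = i) * real (k l)
        + of_bool (j = i) * of_bool (i = l)))" for j k
    by (auto simp: algebra_simps)
  have "multinom_mean p (\<lambda>k. real (k i) * real (k l)) (Suc m) = (\<Sum>j\<in>UNIV. p j *
      (real m * (real m - 1) * p i * p l + of_bool (i = l) * (real m * p i)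
        + (of_bool (j = l) * (real m * p i) + (of_bool (j = i) * (real m * p l) + of_bool (j = i) * of_bool (i = l)))))"
    unfolding multinom_mean_Suc shift multinom_mean_add multinom_mean_cmult Suc multinom_mean_const
      multinom_mean_coord ..
  also have "\<dots> = real (Suc m) * (real (Suc m) - 1) * p i * p l + of_bool (i = l) * (real (Suc m) * p i)"
    by (simp only: distrib_left sum.distrib sum_mult_const sum_mult_of_bool_eq_coord) (simp add: algebra_simps)
  finally show ?case .
qed (simp add: multinom_mean_0)

end

lemma infsum_eq_sums_tot_fiber:
  fixes h :: "('n::finite \<Rightarrow> nat) \<Rightarrow> real"
  assumes nonneg: "\<And>k. h k \<ge> 0"
    and sums: "(\<lambda>m. \<Sum>k\<in>tot_fiber m. h k) sums S"
  shows "infsum h UNIV = S"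
proof -
  define G where "G m = (\<Sum>k\<in>tot_fiber m. h k)" for m
  have G_has_sum: "(G has_sum S) UNIV"
    using sums nonneg unfolding G_def by (intro sums_nonneg_imp_has_sum sum_nonneg) auto
  have fiber_has_sum: "(h has_sum G m) (tot_fiber m)" for m
    unfolding G_def by (rule has_sum_finiteI) (auto simp: finite_tot_fiber)
  have UN_tot_fiber: "(\<Union>m. tot_fiber m) = (UNIV :: ('n \<Rightarrow> nat) set)"
    by (auto simp: tot_fiber_def)
  have "h summable_on (\<Union>m. tot_fiber m)"
    by (rule summable_on_UnionI[OF fiber_has_sum])
       (use G_has_sum has_sum_imp_summable nonneg in \<open>auto simp: disjoint_family_on_def tot_fiber_def\<close>)
  then have "(h has_sum infsum h UNIV) UNIV"
    unfolding UN_tot_fiber by (rule has_sum_infsum)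
  moreover have "bij_betw snd (Sigma UNIV tot_fiber) (UNIV :: ('n \<Rightarrow> nat) set)"
    by (rule bij_betwI[where g="\<lambda>k. (tot k, k)"]) (auto simp: tot_fiber_def)
  ultimately have "((\<lambda>x. h (snd x)) has_sum infsum h UNIV) (Sigma UNIV tot_fiber)"
    using has_sum_reindex_bij_betw by blast
  then have "(G has_sum infsum h UNIV) UNIV"
    by (rule has_sum_SigmaD) (simp add: fiber_has_sum)
  then show ?thesis using G_has_sum has_sum_unique by blast
qed

lemma nuA_eq_multinom_weight:
  "nuA g a k = nu1 g (\<Sum>i\<in>UNIV. a i) (tot k) * fact (tot k) * multinom_weight (\<lambda>i. a i / (\<Sum>i\<in>UNIV. a i)) k"
  unfolding nuA_def multinom_weight_def Let_def by (simp add: prod_dividef prod.distrib[symmetric])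

text \<open>Grouping configurations by their total size: given the total \<open>m\<close>, the colours under
  \<open>nuA g a\<close> are multinomial with \<open>m\<close> trials and cell probabilities \<open>a i / \<Sum>i. a i\<close>.\<close>
lemma EA_eq_sums:
  fixes a :: "'n::finite \<Rightarrow> real"
  assumes "\<And>k. nuA g a k * f k \<ge> 0"
    and "(\<lambda>m. nu1 g (\<Sum>i\<in>UNIV. a i) m * multinom_mean (\<lambda>i. a i / (\<Sum>i\<in>UNIV. a i)) f m) sums S"
  shows "EA g a f = S"
proof -
  have "(\<Sum>k\<in>tot_fiber m. nuA g a k * f k) =
      nu1 g (\<Sum>i\<in>UNIV. a i) m * multinom_mean (\<lambda>i. a i / (\<Sum>i\<in>UNIV. a i)) f m" for m
    unfolding nuA_eq_multinom_weight multinom_mean_def sum_distrib_left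
    by (rule sum.cong) (auto simp: tot_fiber_def)
  then show ?thesis
    unfolding EA_def using assms by (intro infsum_eq_sums_tot_fiber) simp_all
qed

lemma DERIV_cmult_0_iff:
  fixes c :: "'a::real_normed_field"
  assumes "c \<noteq> 0"
  shows "((\<lambda>x. c * f x) has_field_derivative 0) (at x within s) \<longleftrightarrow> (f has_field_derivative 0) (at x within s)"
proof
  assume "((\<lambda>x. c * f x) has_field_derivative 0) (at x within s)"
  from DERIV_cmult[OF this, of "inverse c"] assms show "(f has_field_derivative 0) (at x within s)"
    by (simp add: mult.assoc[symmetric])
qed (drule DERIV_cmult[of _ 0 _ _ c], simp)

lemma DERIV_divide_ident_0_iff:
  fixes f :: "real \<Rightarrow> real"
  assumes "c \<noteq> 0"
  shows "((\<lambda>s. f s / s) has_real_derivative 0) (at c) \<longleftrightarrow> (f has_real_derivative f c / c) (at c)"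
proof
  assume "(f has_real_derivative f c / c) (at c)"
  from DERIV_divide[OF this DERIV_ident] assms
  show "((\<lambda>s. f s / s) has_real_derivative 0) (at c)" by (simp add: field_simps)
next
  assume "((\<lambda>s. f s / s) has_real_derivative 0) (at c)"
  from DERIV_mult[OF DERIV_ident this] assms
  have "((\<lambda>s. s * (f s / s)) has_real_derivative f c / c) (at c)" by simp
  moreover have "\<forall>\<^sub>F s in nhds c. s * (f s / s) = f s"
    using t1_space_nhds[OF assms] by eventually_elim simp
  ultimately show "(f has_real_derivative f c / c) (at c)"
    using DERIV_cong_ev[OF refl _ refl, of "\<lambda>s. s * (f s / s)" f c] by blast
qed
locale zero_range_rate =
  fixes g :: "nat \<Rightarrow> real"
  assumes g0: "g 0 = 0" and gpos: "\<And>k. k > 0 \<Longrightarrow> g k > 0"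
begin

lemma gfact_pos: "gfact g n > 0"
  unfolding gfact_def by (rule prod_pos) (auto intro: gpos)

lemma gfact_Suc: "gfact g (Suc n) = gfact g n * g (Suc n)"
  unfolding gfact_def by (simp add: prod.nat_ivl_Suc' mult.commute)

lemma g_nonneg: "g k \<ge> 0"
  using gpos[of k] g0 by (cases k) auto

lemma wt_nonneg: "x \<ge> 0 \<Longrightarrow> wt g x n \<ge> 0"
  unfolding wt_def using gfact_pos[of n] by simp

lemma wt_pos: "x > 0 \<Longrightarrow> wt g x n > 0"
  unfolding wt_def using gfact_pos[of n] by simp

lemma wt_0 [simp]: "wt g x 0 = 1"
  unfolding wt_def gfact_def by simp

lemma wt_Suc_mult_g: "wt g x (Suc n) * g (Suc n) = x * wt g x n"
  unfolding wt_def gfact_Suc using gpos[of "Suc n"] gfact_pos[of n] by (simp add: field_simps)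

lemma wt_mono: "0 \<le> x \<Longrightarrow> x \<le> y \<Longrightarrow> wt g x n \<le> wt g y n"
  unfolding wt_def using gfact_pos[of n] by (simp add: divide_right_mono power_mono)

definition Zcoeff :: "nat \<Rightarrow> real" where "Zcoeff n = inverse (gfact g n)"
definition Mcoeff :: "nat \<Rightarrow> real" where "Mcoeff n = real n * inverse (gfact g n)"

lemma wt_Zcoeff: "wt g x n = Zcoeff n * x ^ n"
  unfolding wt_def Zcoeff_def by (simp add: divide_inverse mult.commute)

lemma wt_Mcoeff: "real n * wt g x n = Mcoeff n * x ^ n"
  unfolding wt_def Mcoeff_def by (simp add: divide_inverse mult.commute)

lemma Zf_eq: "Zf g = (\<lambda>x. \<Sum>n. Zcoeff n * x ^ n)"
  unfolding Zf_def[abs_def] wt_Zcoeff ..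

definition Mf :: "real \<Rightarrow> real" where "Mf x = (\<Sum>k. real k * wt g x k)"
definition Sf :: "real \<Rightarrow> real" where "Sf x = (\<Sum>k. (real k)^2 * wt g x k)"

lemma Mf_eq: "Mf = (\<lambda>x. \<Sum>n. Mcoeff n * x ^ n)"
  unfolding Mf_def[abs_def] wt_Mcoeff ..

lemma adm_fug_le:
  assumes "adm_fug g y" "0 \<le> x" "x \<le> y"
  shows "adm_fug g x"
proof -
  have "summable (wt g x)"
    by (rule summable_comparison_test[where g="wt g y"]) (use assms wt_nonneg wt_mono in \<open>auto simp: adm_fug_def\<close>)
  moreover have "summable (\<lambda>k. real k * wt g x k)"
    by (rule summable_comparison_test[where g="\<lambda>k. real k * wt g y k"])
       (use assms wt_nonneg wt_mono in \<open>auto simp: adm_fug_def intro!: mult_left_mono\<close>)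
  ultimately show ?thesis using assms by (simp add: adm_fug_def)
qed

lemma Zf_pos:
  assumes "adm_fug g x"
  shows "Zf g x > 0"
  using assms unfolding Zf_def adm_fug_def by (intro suminf_pos2[of _ 0]) (auto intro: wt_nonneg)

lemma sums_shift_Suc:
  fixes d f :: "nat \<Rightarrow> real"
  assumes "(\<lambda>n. d n * x ^ n) sums L" "f 0 = 0" "\<And>n. f (Suc n) = x * (d n * x ^ n)"
  shows "f sums (x * L)"
proof -
  have "(\<lambda>n. x * (d n * x ^ n)) sums (x * L)" by (rule sums_mult[OF assms(1)])
  then have "(\<lambda>n. f (Suc n)) sums (x * L)" using assms(3) by simp
  then show ?thesis using sums_Suc_iff[of f] assms(2) by simp
qed

lemma diffs_Zcoeff_eq: "x * (diffs Zcoeff n * x ^ n) = real (Suc n) * wt g x (Suc n)"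
  unfolding diffs_def wt_Zcoeff by (simp add: algebra_simps)

lemma diffs_Mcoeff_eq: "x * (diffs Mcoeff n * x ^ n) = (real (Suc n))^2 * wt g x (Suc n)"
  unfolding diffs_def wt_Zcoeff Mcoeff_def Zcoeff_def by (simp add: algebra_simps power2_eq_square)

context
  fixes x y :: real
  assumes ady: "adm_fug g y" and x0: "0 < x" and xy: "x < y"
begin

private lemma adm_fug_x: "adm_fug g x"
  using adm_fug_le[OF ady] x0 xy by simp

private lemma Zf_x_pos: "Zf g x > 0"
  using Zf_pos[OF adm_fug_x] .

lemma summable_Zcoeff: "norm z < y \<Longrightarrow> summable (\<lambda>n. Zcoeff n * z ^ n)"
proof -
  assume z: "norm z < y"
  have s: "summable (\<lambda>n. Zcoeff n * y ^ n)" using ady unfolding adm_fug_def wt_Zcoeff by simp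
  have "norm z < norm y" using z x0 xy by simp
  then show ?thesis by (rule powser_inside[OF s])
qed

lemma summable_Mcoeff: "norm z < y \<Longrightarrow> summable (\<lambda>n. Mcoeff n * z ^ n)"
proof -
  assume z: "norm z < y"
  have s: "summable (\<lambda>n. Mcoeff n * y ^ n)" using ady unfolding adm_fug_def wt_Mcoeff[symmetric] by simp
  have "norm z < norm y" using z x0 xy by simp
  then show ?thesis by (rule powser_inside[OF s])
qed

lemma Mf_sums: "(\<lambda>k. real k * wt g x k) sums Mf x"
  using adm_fug_x unfolding adm_fug_def Mf_def by (simp add: summable_sums)

lemma Zf_sums: "wt g x sums Zf g x"
  using adm_fug_x unfolding adm_fug_def Zf_def by (simp add: summable_sums)

lemma diffs_Zcoeff_sums: "(\<lambda>n. diffs Zcoeff n * x ^ n) sums (Mf x / x)"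
proof -
  have s: "summable (\<lambda>n. diffs Zcoeff n * x ^ n)"
    by (rule termdiff_converges[where K=y]) (use x0 xy summable_Zcoeff in auto)
  then have "(\<lambda>n. diffs Zcoeff n * x ^ n) sums (suminf (\<lambda>n. diffs Zcoeff n * x ^ n))" by (rule summable_sums)
  then have "(\<lambda>k. real k * wt g x k) sums (x * suminf (\<lambda>n. diffs Zcoeff n * x ^ n))"
    by (rule sums_shift_Suc) (simp_all add: diffs_Zcoeff_eq)
  then have "Mf x = x * suminf (\<lambda>n. diffs Zcoeff n * x ^ n)" using Mf_sums sums_unique2 by blast
  then show ?thesis using s x0 by (simp add: summable_sums)
qed

lemma Sf_sums: "(\<lambda>k. (real k)^2 * wt g x k) sums Sf x"
  and diffs_Mcoeff_sums: "(\<lambda>n. diffs Mcoeff n * x ^ n) sums (Sf x / x)"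
proof -
  have s: "summable (\<lambda>n. diffs Mcoeff n * x ^ n)"
    by (rule termdiff_converges[where K=y]) (use x0 xy summable_Mcoeff in auto)
  then have "(\<lambda>n. diffs Mcoeff n * x ^ n) sums (suminf (\<lambda>n. diffs Mcoeff n * x ^ n))" by (rule summable_sums)
  then have a: "(\<lambda>k. (real k)^2 * wt g x k) sums (x * suminf (\<lambda>n. diffs Mcoeff n * x ^ n))"
    by (rule sums_shift_Suc) (simp_all add: diffs_Mcoeff_eq)
  then show "(\<lambda>k. (real k)^2 * wt g x k) sums Sf x" unfolding Sf_def by (simp add: sums_iff)
  then have "Sf x = x * suminf (\<lambda>n. diffs Mcoeff n * x ^ n)" using a sums_unique2 by blast
  then show "(\<lambda>n. diffs Mcoeff n * x ^ n) sums (Sf x / x)" using s x0 by (simp add: summable_sums)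
qed

lemma Zf_has_derivative: "(Zf g has_real_derivative Mf x / x) (at x)"
proof -
  have "summable (\<lambda>n. Zcoeff n * ((x + y)/2) ^ n)" using x0 xy by (intro summable_Zcoeff) auto
  from termdiffs_strong[OF this, of x] x0 xy
  have "((\<lambda>x. \<Sum>n. Zcoeff n * x ^ n) has_real_derivative (\<Sum>n. diffs Zcoeff n * x ^ n)) (at x)" by simp
  then show ?thesis unfolding Zf_eq using diffs_Zcoeff_sums[THEN sums_unique] by simp
qed

lemma Mf_has_derivative: "(Mf has_real_derivative Sf x / x) (at x)"
proof -
  have "summable (\<lambda>n. Mcoeff n * ((x + y)/2) ^ n)" using x0 xy by (intro summable_Mcoeff) auto
  from termdiffs_strong[OF this, of x] x0 xy
  have "((\<lambda>x. \<Sum>n. Mcoeff n * x ^ n) has_real_derivative (\<Sum>n. diffs Mcoeff n * x ^ n)) (at x)" by simp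
  then show ?thesis unfolding Mf_eq using diffs_Mcoeff_sums[THEN sums_unique] by simp
qed

lemma meanf_eq: "meanf g = (\<lambda>x. Mf x / Zf g x)"
  unfolding meanf_def[abs_def] Mf_def ..

lemma meanf_has_derivative: "(meanf g has_real_derivative (Sf x * Zf g x - (Mf x)^2) / (x * (Zf g x)^2)) (at x)"
proof -
  have "((\<lambda>x. Mf x / Zf g x) has_real_derivative
          ((Sf x / x) * Zf g x - Mf x * (Mf x / x)) / (Zf g x * Zf g x)) (at x)"
    by (rule DERIV_divide[OF Mf_has_derivative Zf_has_derivative]) (use Zf_x_pos in simp)
  moreover have "((Sf x / x) * Zf g x - Mf x * (Mf x / x)) / (Zf g x * Zf g x)
      = (Sf x * Zf g x - (Mf x)^2) / (x * (Zf g x)^2)"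
    using x0 Zf_x_pos by (simp add: field_simps power2_eq_square)
  ultimately show ?thesis unfolding meanf_eq by simp
qed

lemma variance_wt_pos: "Sf x * Zf g x - (Mf x)^2 > 0"
proof -
  define mu where "mu = Mf x / Zf g x"
  define t where "t k = wt g x k * (real k - mu)^2" for k
  have "(\<lambda>k. (real k)^2 * wt g x k - 2 * mu * (real k * wt g x k) + mu^2 * wt g x k) sums
          (Sf x - 2 * mu * Mf x + mu^2 * Zf g x)"
    by (intro sums_add sums_diff sums_mult Sf_sums Mf_sums Zf_sums)
  moreover have "\<And>k. (real k)^2 * wt g x k - 2 * mu * (real k * wt g x k) + mu^2 * wt g x k = t k"
    unfolding t_def by (simp add: power2_eq_square algebra_simps)
  ultimately have ts: "t sums (Sf x - 2 * mu * Mf x + mu^2 * Zf g x)" by simp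
  have tnn: "t k \<ge> 0" for k unfolding t_def using wt_nonneg[of x k] x0 by simp
  have "t 0 > 0 \<or> t 1 > 0"
  proof (cases "mu = 0")
    case True
    then show ?thesis unfolding t_def using wt_pos[OF x0, of 1] by simp
  next
    case False
    then show ?thesis unfolding t_def by simp
  qed
  then have "0 < suminf t"
    using suminf_pos2[OF sums_summable[OF ts] tnn] by blast
  then have "0 < Sf x - 2 * mu * Mf x + mu^2 * Zf g x" using ts sums_unique by metis
  also have "\<dots> = (Sf x * Zf g x - (Mf x)^2) / Zf g x"
    unfolding mu_def using Zf_x_pos by (simp add: field_simps power2_eq_square)
  finally show ?thesis using Zf_x_pos by (simp add: zero_less_divide_iff)
qed

lemma meanf_derivative_pos: "(Sf x * Zf g x - (Mf x)^2) / (x * (Zf g x)^2) > 0"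
  using variance_wt_pos x0 Zf_x_pos by simp

end

lemma uniform_limit_wt_series:
  "uniform_limit {0..y} (\<lambda>n x. \<Sum>i<n. f i * wt g x i) (\<lambda>x. suminf (\<lambda>i. f i * wt g x i)) sequentially"
  if "summable (\<lambda>i. f i * wt g y i)" "\<And>i. f i \<ge> 0" for f y
proof (rule Weierstrass_m_test)
  fix n x assume "x \<in> {0..y}"
  then show "norm (f n * wt g x n) \<le> f n * wt g y n"
    using wt_nonneg[of x n] wt_mono[of x y n] that(2)[of n] by (auto intro!: mult_left_mono)
qed (fact that)

lemma continuous_on_wt_series:
  assumes "summable (\<lambda>i. f i * wt g y i)" "\<And>i. f i \<ge> 0"
  shows "continuous_on {0..y} (\<lambda>x. suminf (\<lambda>i. f i * wt g x i))"
proof (rule uniform_limit_theorem[OF _ uniform_limit_wt_series[OF assms]])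
  show "\<forall>\<^sub>F n in sequentially. continuous_on {0..y} (\<lambda>x. \<Sum>i<n. f i * wt g x i)"
    unfolding wt_def by (intro always_eventually allI continuous_intros) (use gfact_pos in \<open>auto simp: less_imp_neq[symmetric]\<close>)
qed simp

lemma continuous_on_meanf:
  assumes "adm_fug g y"
  shows "continuous_on {0..y} (meanf g)"
proof -
  have c1: "continuous_on {0..y} (\<lambda>x. suminf (\<lambda>i. real i * wt g x i))"
    by (rule continuous_on_wt_series) (use assms in \<open>auto simp: adm_fug_def\<close>)
  have c2: "continuous_on {0..y} (\<lambda>x. suminf (\<lambda>i. 1 * wt g x i))"
    by (rule continuous_on_wt_series) (use assms in \<open>auto simp: adm_fug_def\<close>)
  have pos: "x \<in> {0..y} \<Longrightarrow> Zf g x \<noteq> 0" for x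
    using Zf_pos adm_fug_le[OF assms, of x] by fastforce
  show ?thesis unfolding meanf_def[abs_def]
    by (rule continuous_on_divide[OF c1]) (use c2 pos in \<open>simp_all add: Zf_def[abs_def]\<close>)
qed

lemma meanf_strict_mono:
  assumes "adm_fug g a" "adm_fug g b" "a < b"
  shows "meanf g a < meanf g b"
proof (rule DERIV_pos_imp_increasing_open[OF assms(3)])
  fix x assume "a < x" "x < b"
  moreover have "a \<ge> 0" using assms by (simp add: adm_fug_def)
  ultimately have "0 < x" "x < b" by auto
  then show "\<exists>d. (meanf g has_real_derivative d) (at x) \<and> d > 0"
    using meanf_has_derivative[OF assms(2) \<open>0 < x\<close> \<open>x < b\<close>] meanf_derivative_pos[OF assms(2) \<open>0 < x\<close> \<open>x < b\<close>] by blast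
next
  have a0: "a \<ge> 0" using assms by (simp add: adm_fug_def)
  show "continuous_on {a..b} (meanf g)"
    by (rule continuous_on_subset[OF continuous_on_meanf[OF assms(2)]]) (use a0 in auto)
qed

lemma meanf_0: "meanf g 0 = 0"
proof -
  have "(\<lambda>k. real k * wt g 0 k) = (\<lambda>k. 0)" by (auto simp: fun_eq_iff wt_def zero_power)
  then show ?thesis unfolding meanf_def by simp
qed

lemma meanf_inj:
  assumes "adm_fug g a" "adm_fug g b" "meanf g a = meanf g b"
  shows "a = b"
  using meanf_strict_mono[OF assms(1,2)] meanf_strict_mono[OF assms(2,1)] assms(3)
  by (cases a b rule: linorder_cases) auto

lemma fug_rho_dom:
  assumes "rho \<in> rho_dom g"
  shows "adm_fug g (fug g rho) \<and> meanf g (fug g rho) = rho"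
proof -
  obtain phi where phi: "adm_fug g phi" "meanf g phi = rho" using assms by (auto simp: rho_dom_def)
  show ?thesis unfolding fug_def
    by (rule theI[of _ phi]) (use phi meanf_inj in auto)
qed

lemma fug_meanf:
  assumes "adm_fug g a"
  shows "fug g (meanf g a) = a"
proof -
  have "meanf g a \<in> rho_dom g" using assms by (auto simp: rho_dom_def)
  from fug_rho_dom[OF this] show ?thesis using meanf_inj assms by blast
qed


lemma fug_pos:
  assumes "rho \<in> rho_dom g" "rho > 0"
  shows "fug g rho > 0"
proof -
  have "fug g rho \<ge> 0" "meanf g (fug g rho) = rho"
    using fug_rho_dom[OF assms(1)] by (auto simp: adm_fug_def)
  with assms(2) meanf_0 show ?thesis by (cases "fug g rho = 0") auto
qed

lemma Mf_fug: "rho \<in> rho_dom g \<Longrightarrow> Mf (fug g rho) = rho * Zf g (fug g rho)"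
  using fug_rho_dom[of rho] Zf_pos[of "fug g rho"] unfolding meanf_def Mf_def
  by (auto simp: field_simps)

lemma nu1_nonneg: "rho \<in> rho_dom g \<Longrightarrow> nu1 g rho m \<ge> 0"
  using fug_rho_dom[of rho] Zf_pos[of "fug g rho"] wt_nonneg
  unfolding nu1_def adm_fug_def by auto

lemma nu1_sums_mean: "rho \<in> rho_dom g \<Longrightarrow> (\<lambda>m. nu1 g rho m * real m) sums rho"
  using fug_rho_dom[of rho]
    sums_divide[OF summable_sums, of "\<lambda>k. real k * wt g (fug g rho) k" "Zf g (fug g rho)"]
  unfolding nu1_def meanf_def adm_fug_def by (simp add: mult.commute)

text \<open>The identity \<open>\<phi> \<nu>(k-1) = g(k) \<nu>(k)\<close> makes the mean jump rate equal to the fugacity.\<close>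
lemma nu1_sums_g:
  assumes "rho \<in> rho_dom g"
  shows "(\<lambda>m. nu1 g rho m * g m) sums fug g rho"
proof -
  define phi where "phi = fug g rho"
  have adm: "adm_fug g phi" using fug_rho_dom[OF assms] phi_def by blast
  then have "(\<lambda>n. phi * wt g phi n) sums (phi * Zf g phi)"
    by (intro sums_mult) (simp add: adm_fug_def Zf_def summable_sums)
  then have "(\<lambda>n. wt g phi (Suc n) * g (Suc n)) sums (phi * Zf g phi)"
    by (simp add: wt_Suc_mult_g)
  then have "(\<lambda>n. wt g phi n * g n) sums (phi * Zf g phi)"
    using sums_Suc_iff[of "\<lambda>n. wt g phi n * g n"] g0 by simp
  from sums_divide[OF this, of "Zf g phi"] show ?thesis
    using Zf_pos[OF adm] unfolding nu1_def phi_def[symmetric] by (simp add: field_simps)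
qed

context
  fixes rho :: real
  assumes rho_int: "rho \<in> interior (rho_dom g)" and rho_pos: "rho > 0"
begin

private lemma rho_dom: "rho \<in> rho_dom g"
  using rho_int interior_subset by blast

private lemma exists_adm_fug_above: "\<exists>psi. adm_fug g psi \<and> fug g rho < psi"
proof -
  obtain e where e: "e > 0" "ball rho e \<subseteq> rho_dom g" using rho_int mem_interior by blast
  then have "rho + e/2 \<in> rho_dom g" by (auto simp: dist_real_def)
  note above = fug_rho_dom[OF this] and at = fug_rho_dom[OF rho_dom]
  have "fug g rho < fug g (rho + e/2)"
  proof (rule ccontr)
    assume "\<not> fug g rho < fug g (rho + e/2)"
    then have "fug g (rho + e/2) < fug g rho \<or> fug g (rho + e/2) = fug g rho" by auto
    then show False
      using meanf_strict_mono[of "fug g (rho + e/2)" "fug g rho"] above at e(1) by auto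
  qed
  with above show ?thesis by blast
qed

lemma isCont_fug: "isCont (fug g) rho"
proof -
  define phi where "phi = fug g rho"
  obtain psi where psi: "adm_fug g psi" "phi < psi" using exists_adm_fug_above phi_def by blast
  have phi_pos: "phi > 0" using fug_pos[OF rho_dom rho_pos] phi_def by simp
  define d where "d = min phi (psi - phi) / 2"
  have inside: "0 < z \<and> z < psi" if "\<bar>z - phi\<bar> \<le> d" for z
  proof -
    have "d \<le> phi/2" "d \<le> (psi - phi)/2" by (simp_all add: d_def)
    with that phi_pos psi(2) show ?thesis by (auto simp: abs_le_iff)
  qed
  have "isCont (fug g) (meanf g phi)"
  proof (rule isCont_inverse_function[where f="meanf g"])
    show "d > 0" using phi_pos psi(2) by (simp add: d_def)
    fix z assume "\<bar>z - phi\<bar> \<le> d"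
    with inside have z: "0 < z" "z < psi" by auto
    show "fug g (meanf g z) = z"
      using z by (intro fug_meanf adm_fug_le[OF psi(1)]) auto
    show "isCont (meanf g) z"
      using DERIV_isCont[OF meanf_has_derivative[OF psi(1) z]] .
  qed
  then show ?thesis using fug_rho_dom[OF rho_dom] phi_def by simp
qed

text \<open>Inverse function rule for \<open>fug g\<close>, the inverse of the strictly increasing \<open>meanf g\<close>.\<close>
lemma fug_has_derivative:
  "(fug g has_real_derivative
      fug g rho * (Zf g (fug g rho))^2 / (Sf (fug g rho) * Zf g (fug g rho) - (Mf (fug g rho))^2)) (at rho)"
proof -
  define phi where "phi = fug g rho"
  obtain psi where psi: "adm_fug g psi" "phi < psi" using exists_adm_fug_above phi_def by blast
  have phi_pos: "phi > 0" using fug_pos[OF rho_dom rho_pos] phi_def by simp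
  obtain e where e: "e > 0" "ball rho e \<subseteq> rho_dom g" using rho_int mem_interior by blast
  define D where "D = (Sf phi * Zf g phi - (Mf phi)^2) / (phi * (Zf g phi)^2)"
  have "(fug g has_real_derivative inverse D) (at rho)"
  proof (rule DERIV_inverse_function[OF _ _ _ _ _ isCont_fug])
    show "(meanf g has_real_derivative D) (at (fug g rho))"
      unfolding D_def phi_def[symmetric] using phi_pos psi by (intro meanf_has_derivative)
    have "D > 0"
      unfolding D_def using phi_pos psi by (intro meanf_derivative_pos)
    then show "D \<noteq> 0" by simp
    show "rho - e < rho" "rho < rho + e" using e by auto
    fix y assume "rho - e < y" "y < rho + e"
    then have "y \<in> rho_dom g" using e by (auto simp: dist_real_def)
    then show "meanf g (fug g y) = y" using fug_rho_dom by blast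
  qed
  then show ?thesis unfolding D_def phi_def by simp
qed

lemma nu1_sums_second_moment: "(\<lambda>m. (real m)^2 * nu1 g rho m) sums (sigma2 g rho + rho^2)"
proof -
  define phi where "phi = fug g rho"
  obtain psi where psi: "adm_fug g psi" "phi < psi" using exists_adm_fug_above phi_def by blast
  have phi_pos: "phi > 0" using fug_pos[OF rho_dom rho_pos] phi_def by simp
  have "(\<lambda>k. (real k)^2 * wt g phi k / Zf g phi) sums (Sf phi / Zf g phi)"
    using Sf_sums[OF psi(1) phi_pos psi(2)] by (rule sums_divide)
  then show ?thesis unfolding sigma2_def nu1_def phi_def[symmetric] by (simp add: sums_iff)
qed

lemma variance_wt_fug:
  "Sf (fug g rho) * Zf g (fug g rho) - (Mf (fug g rho))^2 = (Zf g (fug g rho))^2 * sigma2 g rho"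
proof -
  define phi where "phi = fug g rho"
  obtain psi where psi: "adm_fug g psi" "phi < psi" using exists_adm_fug_above phi_def by blast
  have phi_pos: "phi > 0" using fug_pos[OF rho_dom rho_pos] phi_def by simp
  have "(\<lambda>k. (real k)^2 * wt g phi k / Zf g phi) sums (Sf phi / Zf g phi)"
    using Sf_sums[OF psi(1) phi_pos psi(2)] by (rule sums_divide)
  then have sig: "sigma2 g rho = Sf phi / Zf g phi - rho^2"
    using nu1_sums_second_moment unfolding nu1_def phi_def[symmetric] by (simp add: sums_iff)
  have "Zf g phi > 0"
    using phi_pos psi by (intro Zf_pos adm_fug_le[OF psi(1)]) auto
  then have "Sf phi = Zf g phi * (sigma2 g rho + rho^2)"
    unfolding sig by simp
  then show ?thesis
    unfolding phi_def[symmetric] Mf_fug[OF rho_dom, folded phi_def] by (simp add: power2_eq_square algebra_simps)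
qed

lemma sigma2_pos: "sigma2 g rho > 0"
proof -
  define phi where "phi = fug g rho"
  obtain psi where psi: "adm_fug g psi" "phi < psi" using exists_adm_fug_above phi_def by blast
  have phi_pos: "phi > 0" using fug_pos[OF rho_dom rho_pos] phi_def by simp
  show ?thesis
    using variance_wt_pos[OF psi(1) phi_pos psi(2)] variance_wt_fug unfolding phi_def
    by (simp add: zero_less_mult_iff)
qed

lemma fug_has_derivative_sigma2: "(fug g has_real_derivative fug g rho / sigma2 g rho) (at rho)"
proof -
  have "Zf g (fug g rho) > 0"
    using fug_rho_dom[OF rho_dom] Zf_pos by blast
  then show ?thesis
    using fug_has_derivative unfolding variance_wt_fug by (simp add: power2_eq_square)
qed

lemma fug_derivative_iff_sigma2:
  "(fug g has_real_derivative fug g rho / rho) (at rho) \<longleftrightarrow> sigma2 g rho = rho"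
proof
  assume "(fug g has_real_derivative fug g rho / rho) (at rho)"
  then have "fug g rho / rho = fug g rho / sigma2 g rho"
    using fug_has_derivative_sigma2 DERIV_unique by blast
  then show "sigma2 g rho = rho"
    using fug_pos[OF rho_dom rho_pos] rho_pos sigma2_pos by (simp add: divide_cancel_left)
qed (use fug_has_derivative_sigma2 in simp)

end

context
  fixes a :: "'n::finite \<Rightarrow> real"
  assumes a_pos: "\<And>i. a i > 0" and sum_a_dom: "(\<Sum>i\<in>UNIV. a i) \<in> rho_dom g"
begin

private lemma sum_a_pos: "(\<Sum>i\<in>UNIV. a i) > 0"
  using a_pos by (intro sum_pos) auto

private lemma sum_a_normalized: "(\<Sum>i\<in>UNIV. a i / (\<Sum>i\<in>UNIV. a i)) = 1"
  using sum_a_pos by (simp flip: sum_divide_distrib)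

lemma nuA_nonneg: "nuA g a k \<ge> 0"
  unfolding nuA_eq_multinom_weight multinom_weight_def
  using nu1_nonneg[OF sum_a_dom] a_pos sum_a_pos
  by (intro mult_nonneg_nonneg prod_nonneg) (auto intro: less_imp_le)

lemma gtilde_eq: "gtilde g a i = a i / (\<Sum>i\<in>UNIV. a i) * fug g (\<Sum>i\<in>UNIV. a i)"
proof -
  define rho where "rho = (\<Sum>i\<in>UNIV. a i)"
  define p where "p = (\<lambda>i. a i / rho)"
  have sum_p: "(\<Sum>i\<in>UNIV. p i) = 1"
    using sum_a_normalized unfolding p_def rho_def .
  have "multinom_mean p (gi g i) m = g m * p i" for m
  proof (cases "m = 0")
    case False
    have "multinom_mean p (gi g i) m = multinom_mean p (\<lambda>k. g m / real m * real (k i)) m"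
      by (rule multinom_mean_cong) (simp add: gi_def)
    also have "\<dots> = g m / real m * (real m * p i)"
      unfolding multinom_mean_cmult multinom_mean_coord[OF sum_p] ..
    finally show ?thesis using False by simp
  qed (simp add: multinom_mean_0 gi_def g0)
  then have "(\<lambda>m. nu1 g rho m * multinom_mean p (gi g i) m) sums (fug g rho * p i)"
    using sums_mult2[OF nu1_sums_g[OF sum_a_dom[folded rho_def]], of "p i"] by (simp add: mult.assoc)
  then have "gtilde g a i = fug g rho * p i"
    unfolding gtilde_def using nuA_nonneg g_nonneg
    by (intro EA_eq_sums) (simp_all add: gi_def p_def rho_def)
  then show ?thesis by (simp add: p_def rho_def)
qed

lemma EA_coord: "EA g a (\<lambda>k. real (k i)) = a i"
proof -
  define rho where "rho = (\<Sum>i\<in>UNIV. a i)"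
  have "(\<lambda>m. nu1 g rho m * multinom_mean (\<lambda>i. a i / rho) (\<lambda>k. real (k i)) m) sums (rho * (a i / rho))"
    using sums_mult2[OF nu1_sums_mean[OF sum_a_dom[folded rho_def]], of "a i / rho"]
    by (simp add: multinom_mean_coord[OF sum_a_normalized[folded rho_def]] mult.assoc)
  then have "EA g a (\<lambda>k. real (k i)) = rho * (a i / rho)"
    using nuA_nonneg by (intro EA_eq_sums) (simp_all add: rho_def)
  then show ?thesis using sum_a_pos by (simp add: rho_def)
qed

lemma Gamma_eq:
  assumes "summable (\<lambda>m. (real m)^2 * nu1 g (\<Sum>i\<in>UNIV. a i) m)"
  shows "Gamma g a i l = (sigma2 g (\<Sum>i\<in>UNIV. a i) - (\<Sum>i\<in>UNIV. a i))
      * (a i / (\<Sum>i\<in>UNIV. a i)) * (a l / (\<Sum>i\<in>UNIV. a i)) + of_bool (i = l) * a i"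
proof -
  define rho where "rho = (\<Sum>i\<in>UNIV. a i)"
  define p where "p = (\<lambda>i. a i / rho)"
  have sum_p: "(\<Sum>i\<in>UNIV. p i) = 1"
    using sum_a_normalized unfolding p_def rho_def .
  define s where "s = sigma2 g rho"
  have "(\<lambda>m. (real m)^2 * nu1 g rho m) sums (s + rho^2)"
    using assms unfolding s_def sigma2_def rho_def by (simp add: summable_sums)
  then have "(\<lambda>m. (nu1 g rho m * (real m)^2 - nu1 g rho m * real m) * (p i * p l)
          + of_bool (i = l) * p i * (nu1 g rho m * real m))
        sums ((s + rho^2 - rho) * (p i * p l) + of_bool (i = l) * p i * rho)"
    using nu1_sums_mean[OF sum_a_dom[folded rho_def]]
    by (intro sums_add sums_mult sums_mult2 sums_diff) (simp_all add: mult.commute)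
  moreover have "nu1 g rho m * multinom_mean p (\<lambda>k. real (k i) * real (k l)) m =
      (nu1 g rho m * (real m)^2 - nu1 g rho m * real m) * (p i * p l)
        + of_bool (i = l) * p i * (nu1 g rho m * real m)" for m
    unfolding multinom_mean_coord_mult[OF sum_p]
    by (simp add: algebra_simps power2_eq_square)
  ultimately have "EA g a (\<lambda>k. real (k i) * real (k l))
      = (s + rho^2 - rho) * (p i * p l) + of_bool (i = l) * p i * rho"
    using nuA_nonneg by (intro EA_eq_sums) (simp_all add: rho_def p_def)
  moreover have a_eq: "a i = rho * p i" for i
    using sum_a_pos by (simp add: p_def rho_def)
  ultimately have "Gamma g a i l = (s - rho) * p i * p l + of_bool (i = l) * a i"
    unfolding Gamma_def EA_coord by (simp add: a_eq[of i] a_eq[of l] algebra_simps power2_eq_square)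
  then show ?thesis by (simp add: s_def p_def rho_def)
qed

end

context
  fixes a :: "'n::finite \<Rightarrow> real"
  assumes a_pos: "\<And>i. a i > 0" and sum_a_int: "(\<Sum>i\<in>UNIV. a i) \<in> interior (rho_dom g)"
begin

private lemma sum_a_gt_0: "(\<Sum>i\<in>UNIV. a i) > 0"
  using a_pos by (intro sum_pos) auto

private lemma sum_a_remove: "(\<Sum>i\<in>UNIV. a i) = a j + (\<Sum>k\<in>UNIV - {j}. a k)"
  by (simp add: sum.remove[of UNIV j])

text \<open>Changing one coordinate of \<open>a\<close> only moves the total density, on which \<open>gtilde\<close> depends
  through \<open>fug g s / s\<close>.\<close>
lemma gtilde_fun_upd_eventually:
  "\<forall>\<^sub>F t in nhds (a j). gtilde g (a(j := t)) i
      = (a(j := t)) i * (fug g (t + (\<Sum>k\<in>UNIV - {j}. a k)) / (t + (\<Sum>k\<in>UNIV - {j}. a k)))"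
proof -
  obtain e where e: "e > 0" "ball (\<Sum>i\<in>UNIV. a i) e \<subseteq> rho_dom g"
    using sum_a_int mem_interior by blast
  have "\<forall>\<^sub>F t in nhds (a j). t \<in> ball (a j) (min (a j) e)"
    using a_pos[of j] e(1) by (intro eventually_nhds_in_open) auto
  then show ?thesis
  proof eventually_elim
    case (elim t)
    then have t: "t > 0" "\<bar>t - a j\<bar> < e" by (auto simp: dist_real_def)
    have "(\<Sum>k\<in>UNIV. (a(j := t)) k) \<in> ball (\<Sum>i\<in>UNIV. a i) e"
      unfolding sum_UNIV_fun_upd sum_a_remove[of j] using t(2) by (simp add: dist_real_def abs_minus_commute)
    then have "(\<Sum>k\<in>UNIV. (a(j := t)) k) \<in> rho_dom g" using e(2) by blast
    with gtilde_eq[of "a(j := t)" i] a_pos t(1) show ?case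
      unfolding sum_UNIV_fun_upd by simp
  qed
qed

lemma gtilde_off_diagonal_derivative_iff:
  assumes "i \<noteq> j"
  shows "((\<lambda>t. gtilde g (a(j := t)) i) has_real_derivative 0) (at (a j)) \<longleftrightarrow>
    ((\<lambda>s. fug g s / s) has_real_derivative 0) (at (\<Sum>i\<in>UNIV. a i))"
proof -
  define z where "z = (\<Sum>k\<in>UNIV - {j}. a k)"
  have "((\<lambda>t. gtilde g (a(j := t)) i) has_real_derivative 0) (at (a j)) \<longleftrightarrow>
      ((\<lambda>t. a i * (fug g (t + z) / (t + z))) has_real_derivative 0) (at (a j))"
    using gtilde_fun_upd_eventually[of j i] assms unfolding z_def[symmetric]
    by (intro DERIV_cong_ev) auto
  also have "\<dots> \<longleftrightarrow> ((\<lambda>t. fug g (t + z) / (t + z)) has_real_derivative 0) (at (a j))"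
    using a_pos[of i] by (intro DERIV_cmult_0_iff) simp
  also have "\<dots> \<longleftrightarrow> ((\<lambda>s. fug g s / s) has_real_derivative 0) (at (\<Sum>i\<in>UNIV. a i))"
    unfolding sum_a_remove[of j] z_def[symmetric] using DERIV_shift[of "\<lambda>s. fug g s / s" 0 "a j" z] by simp
  finally show ?thesis .
qed

lemma gtilde_diagonal_derivative:
  assumes "((\<lambda>s. fug g s / s) has_real_derivative 0) (at (\<Sum>i\<in>UNIV. a i))"
  shows "((\<lambda>t. gtilde g (a(i := t)) i) has_real_derivative
    fug g (\<Sum>i\<in>UNIV. a i) / (\<Sum>i\<in>UNIV. a i)) (at (a i))"
proof -
  define z where "z = (\<Sum>k\<in>UNIV - {i}. a k)"
  have sum_a: "(\<Sum>i\<in>UNIV. a i) = a i + z" unfolding z_def by (rule sum_a_remove)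
  have "((\<lambda>t. fug g (t + z) / (t + z)) has_real_derivative 0) (at (a i))"
    using assms DERIV_shift[of "\<lambda>s. fug g s / s" 0 "a i" z] unfolding sum_a by simp
  from DERIV_mult[OF DERIV_ident this]
  have "((\<lambda>t. t * (fug g (t + z) / (t + z))) has_real_derivative fug g (a i + z) / (a i + z)) (at (a i))"
    by simp
  moreover have "\<forall>\<^sub>F t in nhds (a i). gtilde g (a(i := t)) i = t * (fug g (t + z) / (t + z))"
    using gtilde_fun_upd_eventually[of i i] unfolding z_def[symmetric] by simp
  ultimately show ?thesis
    unfolding sum_a by (subst DERIV_cong_ev) auto
qed

lemma FC_iff_fug_derivative:
  assumes "CARD('n) \<ge> 2"
  shows "FC g a \<longleftrightarrow>
    (fug g has_real_derivative fug g (\<Sum>i\<in>UNIV. a i) / (\<Sum>i\<in>UNIV. a i)) (at (\<Sum>i\<in>UNIV. a i))"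
proof -
  obtain i0 j0 :: 'n where "i0 \<noteq> j0" using assms by (meson card_2_iff' ex_card)
  have "FC g a \<longleftrightarrow> ((\<lambda>s. fug g s / s) has_real_derivative 0) (at (\<Sum>i\<in>UNIV. a i))"
  proof
    assume "FC g a"
    then have "((\<lambda>t. gtilde g (a(j0 := t)) i0) has_real_derivative 0) (at (a j0))"
      using \<open>i0 \<noteq> j0\<close> unfolding FC_def by blast
    then show "((\<lambda>s. fug g s / s) has_real_derivative 0) (at (\<Sum>i\<in>UNIV. a i))"
      using gtilde_off_diagonal_derivative_iff[OF \<open>i0 \<noteq> j0\<close>] by blast
  next
    assume "((\<lambda>s. fug g s / s) has_real_derivative 0) (at (\<Sum>i\<in>UNIV. a i))"
    then show "FC g a"
      unfolding FC_def using gtilde_diagonal_derivative gtilde_off_diagonal_derivative_iff by blast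
  qed
  also have "\<dots> \<longleftrightarrow>
      (fug g has_real_derivative fug g (\<Sum>i\<in>UNIV. a i) / (\<Sum>i\<in>UNIV. a i)) (at (\<Sum>i\<in>UNIV. a i))"
    using sum_a_gt_0 by (intro DERIV_divide_ident_0_iff) simp
  finally show ?thesis .
qed

lemma Gamma_conditions_iff_sigma2:
  assumes "CARD('n) \<ge> 2"
  shows "(\<forall>i j. i \<noteq> j \<longrightarrow> Gamma g a i j = 0 \<and>
            gtilde g a i * Gamma g a j j = gtilde g a j * Gamma g a i i)
    \<longleftrightarrow> sigma2 g (\<Sum>i\<in>UNIV. a i) = (\<Sum>i\<in>UNIV. a i)"
proof -
  define rho where "rho = (\<Sum>i\<in>UNIV. a i)"
  have rho_pos: "rho > 0" and rho_dom: "rho \<in> rho_dom g"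
    using sum_a_gt_0 sum_a_int interior_subset unfolding rho_def by blast+
  have "summable (\<lambda>m. (real m)^2 * nu1 g rho m)"
    using nu1_sums_second_moment[OF sum_a_int[folded rho_def] rho_pos] by (rule sums_summable)
  note Gamma = Gamma_eq[of a, OF a_pos, folded rho_def, OF rho_dom this]
  note gtilde = gtilde_eq[of a, OF a_pos, folded rho_def, OF rho_dom]
  show ?thesis
    unfolding rho_def[symmetric]
  proof
    assume conditions: "\<forall>i j. i \<noteq> j \<longrightarrow> Gamma g a i j = 0 \<and>
        gtilde g a i * Gamma g a j j = gtilde g a j * Gamma g a i i"
    obtain i0 j0 :: 'n where "i0 \<noteq> j0" using assms by (meson card_2_iff' ex_card)
    with conditions have "Gamma g a i0 j0 = 0" by blast
    then show "sigma2 g rho = rho"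
      unfolding Gamma using \<open>i0 \<noteq> j0\<close> a_pos[of i0] a_pos[of j0] rho_pos by simp
  next
    assume "sigma2 g rho = rho"
    then show "\<forall>i j. i \<noteq> j \<longrightarrow> Gamma g a i j = 0 \<and>
        gtilde g a i * Gamma g a j j = gtilde g a j * Gamma g a i i"
      unfolding Gamma gtilde by (simp add: mult_ac)
  qed
qed

end

end

theorem proposition7p4:
  fixes g :: "nat \<Rightarrow> real" and a0 :: "'n::finite \<Rightarrow> real"
  assumes n2: "CARD('n) \<ge> 2"
    and g0: "g 0 = 0"
    and gpos: "\<And>k. k > 0 \<Longrightarrow> g k > 0"
    and apos: "\<And>i. a0 i > 0"
    and rho_int: "(\<Sum>i\<in>UNIV. a0 i) \<in> interior (rho_dom g)"
  shows "(FC g a0 \<longleftrightarrow>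
            (\<forall>i j. i \<noteq> j \<longrightarrow> Gamma g a0 i j = 0 \<and>
                 gtilde g a0 i * Gamma g a0 j j = gtilde g a0 j * Gamma g a0 i i))
       \<and> (FC g a0 \<longleftrightarrow>
            (fug g has_real_derivative fug g (\<Sum>i\<in>UNIV. a0 i) / (\<Sum>i\<in>UNIV. a0 i))
              (at (\<Sum>i\<in>UNIV. a0 i)))
       \<and> ((fug g has_real_derivative fug g (\<Sum>i\<in>UNIV. a0 i) / (\<Sum>i\<in>UNIV. a0 i))
              (at (\<Sum>i\<in>UNIV. a0 i))
            \<longleftrightarrow> sigma2 g (\<Sum>i\<in>UNIV. a0 i) = (\<Sum>i\<in>UNIV. a0 i))"
proof -
  interpret zero_range_rate g
    using g0 gpos by unfold_locales
  have "(\<Sum>i\<in>UNIV. a0 i) > 0"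
    using apos by (intro sum_pos) auto
  then show ?thesis
    using FC_iff_fug_derivative[OF apos rho_int n2] Gamma_conditions_iff_sigma2[OF apos rho_int n2]
      fug_derivative_iff_sigma2[OF rho_int] by blast
qed

end
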